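(* Let $G$ be a strongly chordal finite simple graph with at least one edge. Then $G$ has a simplicial edge $e$ such that $G\setminus e$ is strongly chordal. Moreover, $e$ can be chosen so that, in addition, if $G$ is claw-free then $G\setminus e$ is claw-free.
   Context: A graph is chordal if it has no induced cycle of length at least $4$. A perfect elimination order of $G$ is an ordering $v_1,\dots,v_n$ of the vertices such that whenever $v_iv_j,v_iv_k\in E(G)$ with $i<j,k$, then $v_jv_k\in E(G)$. A strong elimination order is a perfect elimination order such that whenever $v_iv_k, v_kv_j, v_iv_\ell\in E(G)$ with $i<k<\ell$ and $i<j$, then $v_jv_\ell\in E(G)$. $G$ is strongly chordal if it has a strong elimination order. A clique is a set of vertices inducing a complete graph. For a chordal graph $G$, a simplicial edge is an edge $e$ contained in exactly one maximal clique of $G$ and such that $G\setminus e$ (delete the edge, keep all vertices) is chordal. The claw is $K_{1,3}$; claw-free means no induced claw. *)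

theory Defs
  imports Main
begin

definition sgraph :: "'a set \<Rightarrow> 'a set set \<Rightarrow> bool" where
  "sgraph V E \<longleftrightarrow> finite V \<and> (\<forall>e\<in>E. \<exists>u v. u \<noteq> v \<and> u \<in> V \<and> v \<in> V \<and> e = {u, v})"

definition adj :: "'a set set \<Rightarrow> 'a \<Rightarrow> 'a \<Rightarrow> bool" where
  "adj E u v \<longleftrightarrow> {u, v} \<in> E"

definition induced_cycle :: "'a set \<Rightarrow> 'a set set \<Rightarrow> 'a list \<Rightarrow> bool" where
  "induced_cycle V E cs \<longleftrightarrow> length cs \<ge> 3 \<and> distinct cs \<and> set cs \<subseteq> V \<and>
     (\<forall>i < length cs. \<forall>j < length cs.
        adj E (cs ! i) (cs ! j) \<longleftrightarrow>
          (j = Suc i mod length cs \<or> i = Suc j mod length cs))"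

definition chordal :: "'a set \<Rightarrow> 'a set set \<Rightarrow> bool" where
  "chordal V E \<longleftrightarrow> \<not> (\<exists>cs. induced_cycle V E cs \<and> length cs \<ge> 4)"

definition vertex_order :: "'a set \<Rightarrow> 'a list \<Rightarrow> bool" where
  "vertex_order V vs \<longleftrightarrow> distinct vs \<and> set vs = V"

definition perfect_elim_order :: "'a set \<Rightarrow> 'a set set \<Rightarrow> 'a list \<Rightarrow> bool" where
  "perfect_elim_order V E vs \<longleftrightarrow> vertex_order V vs \<and>
     (\<forall>i j k. i < length vs \<and> j < length vs \<and> k < length vs \<and> i < j \<and> i < k \<and>
        adj E (vs ! i) (vs ! j) \<and> adj E (vs ! i) (vs ! k) \<and> j \<noteq> k \<longrightarrow>
        adj E (vs ! j) (vs ! k))"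

definition strong_elim_order :: "'a set \<Rightarrow> 'a set set \<Rightarrow> 'a list \<Rightarrow> bool" where
  "strong_elim_order V E vs \<longleftrightarrow> perfect_elim_order V E vs \<and>
     (\<forall>i j k l. i < length vs \<and> j < length vs \<and> k < length vs \<and> l < length vs \<and>
        i < k \<and> k < l \<and> i < j \<and>
        adj E (vs ! i) (vs ! k) \<and> adj E (vs ! k) (vs ! j) \<and> adj E (vs ! i) (vs ! l) \<and> j \<noteq> l \<longrightarrow>
        adj E (vs ! j) (vs ! l))"

definition strongly_chordal :: "'a set \<Rightarrow> 'a set set \<Rightarrow> bool" where
  "strongly_chordal V E \<longleftrightarrow> (\<exists>vs. strong_elim_order V E vs)"

definition clique :: "'a set \<Rightarrow> 'a set set \<Rightarrow> 'a set \<Rightarrow> bool" where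
  "clique V E K \<longleftrightarrow> K \<subseteq> V \<and> (\<forall>u\<in>K. \<forall>v\<in>K. u \<noteq> v \<longrightarrow> adj E u v)"

definition maximal_clique :: "'a set \<Rightarrow> 'a set set \<Rightarrow> 'a set \<Rightarrow> bool" where
  "maximal_clique V E K \<longleftrightarrow> clique V E K \<and> (\<forall>K'. clique V E K' \<and> K \<subseteq> K' \<longrightarrow> K' = K)"

definition simplicial_edge :: "'a set \<Rightarrow> 'a set set \<Rightarrow> 'a set \<Rightarrow> bool" where
  "simplicial_edge V E e \<longleftrightarrow> e \<in> E \<and> (\<exists>!K. maximal_clique V E K \<and> e \<subseteq> K) \<and>
     chordal V (E - {e})"

definition claw_free :: "'a set \<Rightarrow> 'a set set \<Rightarrow> bool" where
  "claw_free V E \<longleftrightarrow> \<not> (\<exists>c x y z. c \<in> V \<and> x \<in> V \<and> y \<in> V \<and> z \<in> V \<and>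
      distinct [c, x, y, z] \<and> adj E c x \<and> adj E c y \<and> adj E c z \<and>
      \<not> adj E x y \<and> \<not> adj E x z \<and> \<not> adj E y z)"

end

(* Take a strong elimination order, let v be its first vertex having a neighbour and w the last
   neighbour of v in the order, and delete e = vw.  All vertices before v are isolated, so v can
   only occur as the first vertex of the configurations constrained by the (strong) elimination
   condition; hence the order stays a strong elimination order of G - e, which is therefore
   strongly chordal and chordal.  Since v is simplicial, its closed neighbourhood is the unique
   maximal clique containing e.  Finally, the strong condition at v forces every vertex at distance
   two from v to be adjacent to w; a claw of G - e that is not a claw of G has v and w as two of
   its leaves, so its third leaf would be adjacent to w. *)

theory Submission
  imports Defs
begin

lemma adj_commute: "adj E u v \<longleftrightarrow> adj E v u"
  unfolding adj_def by (simp add: insert_commute)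

lemma adj_irrefl: "sgraph V E \<Longrightarrow> \<not> adj E u u"
  unfolding adj_def sgraph_def by (metis doubleton_eq_iff insert_absorb2)

lemma adj_in_V: "sgraph V E \<Longrightarrow> adj E u v \<Longrightarrow> u \<in> V \<and> v \<in> V"
  unfolding adj_def sgraph_def by (metis doubleton_eq_iff)

lemma adj_Diff_singleton: "adj (E - {e}) u v \<longleftrightarrow> adj E u v \<and> {u, v} \<noteq> e"
  unfolding adj_def by auto

lemma induced_cycle_nonadjacent_neighbours:
  assumes cyc: "induced_cycle V E cs" and long: "4 \<le> length cs" and p: "p < length cs"
  obtains x y where "x \<in> set cs" "y \<in> set cs" "x \<noteq> y" "x \<noteq> cs ! p" "y \<noteq> cs ! p"
    "adj E (cs ! p) x" "adj E (cs ! p) y" "\<not> adj E x y"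
proof -
  define m where "m = length cs"
  define succ where "succ q = (if Suc q = m then 0 else Suc q)" for q
  define pred where "pred q = (if q = 0 then m - 1 else q - 1)" for q
  have adj_iff: "adj E (cs ! a) (cs ! b) \<longleftrightarrow> b = succ a \<or> a = succ b" if "a < m" "b < m" for a b
    using cyc that unfolding induced_cycle_def m_def succ_def by (simp add: mod_Suc)
  have "m \<ge> 4" "p < m" using long p by (simp_all add: m_def)
  then have "pred p < m" "succ p < m" "pred p \<noteq> succ p" "succ (pred p) = p"
    "succ p \<noteq> succ (pred p)" "pred p \<noteq> succ (succ p)" "succ p \<noteq> p" "pred p \<noteq> p"
    unfolding succ_def pred_def by auto
  moreover have "distinct cs" using cyc unfolding induced_cycle_def by simp
  ultimately show thesis
    using that[of "cs ! pred p" "cs ! succ p"] adj_iff \<open>p < m\<close>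
    by (auto simp: m_def nth_eq_iff_index_eq)
qed

lemma vertex_order_obtain_index:
  assumes "vertex_order V vs" "v \<in> V"
  obtains j where "j < length vs" "vs ! j = v"
  using assms unfolding vertex_order_def by (metis in_set_conv_nth)

lemma vertex_order_first_in:
  assumes "vertex_order V vs" "S \<subseteq> V" "S \<noteq> {}"
  obtains i where "i < length vs" "vs ! i \<in> S" "\<And>j. j < length vs \<Longrightarrow> vs ! j \<in> S \<Longrightarrow> i \<le> j"
proof -
  obtain v where "v \<in> S" using assms(3) by blast
  then obtain k where "k < length vs \<and> vs ! k \<in> S"
    using vertex_order_obtain_index[OF assms(1)] assms(2) by blast
  define i where "i = (LEAST i. i < length vs \<and> vs ! i \<in> S)"
  have "i < length vs \<and> vs ! i \<in> S"
    unfolding i_def by (rule LeastI) fact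
  moreover have "i \<le> j" if "j < length vs" "vs ! j \<in> S" for j
    unfolding i_def using that by (intro Least_le) blast
  ultimately show thesis using that by blast
qed

lemma perfect_elim_order_imp_chordal:
  assumes peo: "perfect_elim_order V E vs"
  shows "chordal V E"
  unfolding chordal_def
proof
  assume "\<exists>cs. induced_cycle V E cs \<and> 4 \<le> length cs"
  then obtain cs where cyc: "induced_cycle V E cs" and long: "4 \<le> length cs" by blast
  have vo: "vertex_order V vs" using peo unfolding perfect_elim_order_def by simp
  have "set cs \<subseteq> V" "set cs \<noteq> {}" using cyc long unfolding induced_cycle_def by auto
  then obtain i where i: "i < length vs" "vs ! i \<in> set cs"
    and first: "\<And>j. j < length vs \<Longrightarrow> vs ! j \<in> set cs \<Longrightarrow> i \<le> j"
    using vertex_order_first_in[OF vo] by blast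
  obtain p where "p < length cs" "cs ! p = vs ! i" using i(2) by (metis in_set_conv_nth)
  then obtain x y where xy: "x \<in> set cs" "y \<in> set cs" "x \<noteq> y" "x \<noteq> vs ! i" "y \<noteq> vs ! i"
    "adj E (vs ! i) x" "adj E (vs ! i) y" "\<not> adj E x y"
    using induced_cycle_nonadjacent_neighbours[OF cyc long] by metis
  have later: "\<exists>j. i < j \<and> j < length vs \<and> vs ! j = v" if v: "v \<in> set cs" "v \<noteq> vs ! i" for v
  proof -
    obtain j where "j < length vs" "vs ! j = v"
      using vertex_order_obtain_index[OF vo] v(1) \<open>set cs \<subseteq> V\<close> by blast
    with first[of j] v show ?thesis by (metis le_neq_implies_less)
  qed
  obtain j k where "i < j" "j < length vs" "vs ! j = x" "i < k" "k < length vs" "vs ! k = y"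
    using later[OF xy(1,4)] later[OF xy(2,5)] by blast
  then have "adj E x y"
    using peo i(1) xy(3,6,7) unfolding perfect_elim_order_def by blast
  with xy(8) show False ..
qed

lemma vertex_order_first_nonisolated:
  assumes sg: "sgraph V E" and vo: "vertex_order V vs" and "E \<noteq> {}"
  obtains i where "i < length vs" "\<exists>w. adj E (vs ! i) w" "\<forall>a<i. \<forall>w. \<not> adj E (vs ! a) w"
proof -
  define S where "S = {v \<in> V. \<exists>w. adj E v w}"
  obtain e where "e \<in> E" using \<open>E \<noteq> {}\<close> by blast
  then obtain u v where "u \<in> V" "e = {u, v}" using sg unfolding sgraph_def by blast
  with \<open>e \<in> E\<close> have "S \<noteq> {}" unfolding S_def adj_def by blast
  then obtain i where i: "i < length vs" "vs ! i \<in> S"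
    and first: "\<And>j. j < length vs \<Longrightarrow> vs ! j \<in> S \<Longrightarrow> i \<le> j"
    using vertex_order_first_in[OF vo, of S] unfolding S_def by auto
  have "\<not> adj E (vs ! a) w" if "a < i" for a w
  proof
    assume "adj E (vs ! a) w"
    moreover have "a < length vs" "vs ! a \<in> V" using that i(1) vo unfolding vertex_order_def by auto
    ultimately show False using first[of a] that unfolding S_def by auto
  qed
  with i show thesis using that unfolding S_def by blast
qed

lemma vertex_order_last_neighbour:
  assumes sg: "sgraph V E" and vo: "vertex_order V vs" and "adj E (vs ! i) w"
  obtains l where "l < length vs" "adj E (vs ! i) (vs ! l)"
    "\<forall>j<length vs. adj E (vs ! i) (vs ! j) \<longrightarrow> j \<le> l"
proof -
  define N where "N = {j. j < length vs \<and> adj E (vs ! i) (vs ! j)}"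
  obtain k where "k < length vs" "vs ! k = w"
    using vertex_order_obtain_index[OF vo] adj_in_V[OF sg \<open>adj E (vs ! i) w\<close>] by blast
  with \<open>adj E (vs ! i) w\<close> have "N \<noteq> {}" unfolding N_def by blast
  moreover have "finite N" unfolding N_def by simp
  ultimately have "Max N \<in> N" "\<forall>j\<in>N. j \<le> Max N" by simp_all
  with that show thesis unfolding N_def by blast
qed

lemma nonisolated_after_isolated_prefix:
  assumes sg: "sgraph V E" and vo: "vertex_order V vs"
    and before_isolated: "\<forall>a<i. \<forall>w. \<not> adj E (vs ! a) w"
    and "adj E u w" "u \<noteq> vs ! i"
  obtains j where "i < j" "j < length vs" "vs ! j = u"
proof -
  obtain j where j: "j < length vs" "vs ! j = u"
    using vertex_order_obtain_index[OF vo] adj_in_V[OF sg \<open>adj E u w\<close>] by blast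
  moreover have "\<not> j < i" using before_isolated j \<open>adj E u w\<close> by blast
  moreover have "j \<noteq> i" using j \<open>u \<noteq> vs ! i\<close> by blast
  ultimately show thesis using that by (metis linorder_neqE_nat)
qed

lemma later_pair_neq:
  assumes "distinct vs" "i < j" "i < k" "j < length vs" "k < length vs" "vs ! i \<in> e"
  shows "{vs ! j, vs ! k} \<noteq> e"
proof
  assume "{vs ! j, vs ! k} = e"
  with assms have "vs ! i = vs ! j \<or> vs ! i = vs ! k" by blast
  with assms show False by (simp add: nth_eq_iff_index_eq)
qed

lemma perfect_elim_order_Diff_edge:
  assumes peo: "perfect_elim_order V E vs" and "i < length vs" "vs ! i \<in> e"
    and before_isolated: "\<forall>a<i. \<forall>w. \<not> adj E (vs ! a) w"
  shows "perfect_elim_order V (E - {e}) vs"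
  unfolding perfect_elim_order_def
proof (intro conjI allI impI)
  show vo: "vertex_order V vs" using peo unfolding perfect_elim_order_def by simp
  fix a j k
  assume h: "a < length vs \<and> j < length vs \<and> k < length vs \<and> a < j \<and> a < k \<and>
    adj (E - {e}) (vs ! a) (vs ! j) \<and> adj (E - {e}) (vs ! a) (vs ! k) \<and> j \<noteq> k"
  then have "adj E (vs ! j) (vs ! k)"
    using peo unfolding perfect_elim_order_def adj_Diff_singleton by blast
  moreover have "i \<le> a" using h before_isolated unfolding adj_Diff_singleton by (meson not_le)
  with h have "{vs ! j, vs ! k} \<noteq> e"
    using later_pair_neq[of vs i j k e] vo \<open>vs ! i \<in> e\<close> unfolding vertex_order_def by simp
  ultimately show "adj (E - {e}) (vs ! j) (vs ! k)" unfolding adj_Diff_singleton ..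
qed

lemma strong_elim_order_Diff_edge:
  assumes seo: "strong_elim_order V E vs" and "i < length vs" "vs ! i \<in> e"
    and before_isolated: "\<forall>a<i. \<forall>w. \<not> adj E (vs ! a) w"
  shows "strong_elim_order V (E - {e}) vs"
  unfolding strong_elim_order_def
proof (intro conjI allI impI)
  have peo: "perfect_elim_order V E vs" using seo unfolding strong_elim_order_def by simp
  then show "perfect_elim_order V (E - {e}) vs"
    using perfect_elim_order_Diff_edge assms(2-4) by blast
  fix a j k l
  assume h: "a < length vs \<and> j < length vs \<and> k < length vs \<and> l < length vs \<and>
    a < k \<and> k < l \<and> a < j \<and> adj (E - {e}) (vs ! a) (vs ! k) \<and>
    adj (E - {e}) (vs ! k) (vs ! j) \<and> adj (E - {e}) (vs ! a) (vs ! l) \<and> j \<noteq> l"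
  then have "adj E (vs ! j) (vs ! l)"
    using seo unfolding strong_elim_order_def adj_Diff_singleton by blast
  moreover have "i \<le> a" using h before_isolated unfolding adj_Diff_singleton by (meson not_le)
  with h have "{vs ! j, vs ! l} \<noteq> e"
    using later_pair_neq[of vs i j l e] peo \<open>vs ! i \<in> e\<close>
    unfolding perfect_elim_order_def vertex_order_def by simp
  ultimately show "adj (E - {e}) (vs ! j) (vs ! l)" unfolding adj_Diff_singleton ..
qed

definition closed_nbhd :: "'a set set \<Rightarrow> 'a \<Rightarrow> 'a set" where
  "closed_nbhd E v = insert v {u. adj E v u}"

lemma clique_subset_closed_nbhd:
  assumes "clique V E K" "v \<in> K"
  shows "K \<subseteq> closed_nbhd E v"
  using assms unfolding clique_def closed_nbhd_def by auto

lemma closed_nbhd_unique_maximal_clique: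
  assumes cl: "clique V E (closed_nbhd E v)" and "v \<in> e" "e \<subseteq> closed_nbhd E v"
  shows "\<exists>!K. maximal_clique V E K \<and> e \<subseteq> K"
proof (rule ex1I)
  have "v \<in> closed_nbhd E v" unfolding closed_nbhd_def by simp
  then have "K = closed_nbhd E v" if "clique V E K" "closed_nbhd E v \<subseteq> K" for K
    using that clique_subset_closed_nbhd[of V E K v] by blast
  with cl show "maximal_clique V E (closed_nbhd E v) \<and> e \<subseteq> closed_nbhd E v"
    using assms(3) unfolding maximal_clique_def by blast
next
  fix K assume K: "maximal_clique V E K \<and> e \<subseteq> K"
  then have "K \<subseteq> closed_nbhd E v"
    using clique_subset_closed_nbhd[of V E K v] \<open>v \<in> e\<close> unfolding maximal_clique_def by blast
  with K cl show "K = closed_nbhd E v" unfolding maximal_clique_def by blast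
qed

lemma perfect_elim_order_closed_nbhd_clique:
  assumes sg: "sgraph V E" and peo: "perfect_elim_order V E vs" and i: "i < length vs"
    and before_isolated: "\<forall>a<i. \<forall>w. \<not> adj E (vs ! a) w"
  shows "clique V E (closed_nbhd E (vs ! i))"
  unfolding clique_def
proof (intro conjI ballI impI)
  have vo: "vertex_order V vs" using peo unfolding perfect_elim_order_def by simp
  then show "closed_nbhd E (vs ! i) \<subseteq> V"
    using i adj_in_V[OF sg] unfolding closed_nbhd_def vertex_order_def by auto
  have later: "\<exists>j. i < j \<and> j < length vs \<and> vs ! j = u" if "adj E (vs ! i) u" for u
  proof -
    have "adj E u (vs ! i)" "u \<noteq> vs ! i" using that adj_irrefl[OF sg] by (auto simp: adj_commute)
    then show ?thesis using nonisolated_after_isolated_prefix[OF sg vo before_isolated] by metis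
  qed
  fix u w assume "u \<in> closed_nbhd E (vs ! i)" "w \<in> closed_nbhd E (vs ! i)" "u \<noteq> w"
  then consider "u = vs ! i" "adj E (vs ! i) w" | "w = vs ! i" "adj E (vs ! i) u"
    | "adj E (vs ! i) u" "adj E (vs ! i) w"
    unfolding closed_nbhd_def by blast
  then show "adj E u w"
  proof cases
    case 3
    with later obtain j k
      where "i < j" "j < length vs" "vs ! j = u" "i < k" "k < length vs" "vs ! k = w"
      by blast
    with 3 \<open>u \<noteq> w\<close> i peo show ?thesis unfolding perfect_elim_order_def by blast
  qed (simp_all add: adj_commute)
qed

lemma strong_elim_order_second_nbhd:
  assumes sg: "sgraph V E" and seo: "strong_elim_order V E vs" and i: "i < length vs"
    and before_isolated: "\<forall>a<i. \<forall>w. \<not> adj E (vs ! a) w"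
    and l: "l < length vs" "adj E (vs ! i) (vs ! l)"
    and last: "\<forall>j<length vs. adj E (vs ! i) (vs ! j) \<longrightarrow> j \<le> l"
    and c: "adj E (vs ! i) c" and z: "adj E c z" "z \<noteq> vs ! i" "z \<noteq> vs ! l"
  shows "adj E z (vs ! l)"
proof -
  have vo: "vertex_order V vs"
    using seo unfolding strong_elim_order_def perfect_elim_order_def by simp
  have "adj E c (vs ! i)" "c \<noteq> vs ! i" "adj E z c"
    using c z(1) adj_irrefl[OF sg] by (auto simp: adj_commute)
  then obtain k j where k: "i < k" "k < length vs" "vs ! k = c"
    and j: "i < j" "j < length vs" "vs ! j = z"
    using nonisolated_after_isolated_prefix[OF sg vo before_isolated] z(2) by metis
  show ?thesis
  proof (cases "k = l")
    case True
    with k z(1) show ?thesis by (simp add: adj_commute)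
  next
    case False
    with last k c have "k < l" by fastforce
    then have "adj E (vs ! j) (vs ! l)"
      using seo i j k l c z(1,3) unfolding strong_elim_order_def by blast
    with j show ?thesis by simp
  qed
qed

lemma claw_free_Diff_edge:
  assumes cf: "claw_free V E"
    and dominated: "\<And>c z. adj E x c \<Longrightarrow> adj E c z \<Longrightarrow> z \<noteq> x \<Longrightarrow> z \<noteq> y \<Longrightarrow> adj E z y"
  shows "claw_free V (E - {{x, y}})"
proof -
  let ?F = "E - {{x, y}}"
  have no_claw_on_xy: False
    if "{p, q} = {x, y}" "p \<noteq> q" "adj ?F c p" "adj ?F c q" "adj ?F c r" "r \<noteq> p" "r \<noteq> q"
      "\<not> adj ?F p r" "\<not> adj ?F q r" for c p q r
  proof -
    have "x \<noteq> y" "r \<noteq> x" "r \<noteq> y" using that by (auto simp: doubleton_eq_iff)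
    moreover have "adj E x c" "adj E c r"
      using that unfolding adj_Diff_singleton by (auto simp: doubleton_eq_iff adj_commute)
    ultimately have "adj ?F r y"
      using dominated unfolding adj_Diff_singleton by (auto simp: doubleton_eq_iff)
    with that show False by (auto simp: doubleton_eq_iff adj_commute)
  qed
  show ?thesis
    unfolding claw_free_def
  proof (intro notI, elim exE conjE)
    fix c p q r
    assume claw: "distinct [c, p, q, r]" "adj ?F c p" "adj ?F c q" "adj ?F c r"
      "\<not> adj ?F p q" "\<not> adj ?F p r" "\<not> adj ?F q r" "c \<in> V" "p \<in> V" "q \<in> V" "r \<in> V"
    have "adj E c p" "adj E c q" "adj E c r"
      using claw(2-4) by (simp_all add: adj_Diff_singleton)
    moreover have "\<not> (c \<in> V \<and> p \<in> V \<and> q \<in> V \<and> r \<in> V \<and> distinct [c, p, q, r] \<and>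
        adj E c p \<and> adj E c q \<and> adj E c r \<and> \<not> adj E p q \<and> \<not> adj E p r \<and> \<not> adj E q r)"
      using cf unfolding claw_free_def by blast
    ultimately have "adj E p q \<or> adj E p r \<or> adj E q r" using claw(1,8-11) by blast
    with claw(5-7) have "{p, q} = {x, y} \<or> {p, r} = {x, y} \<or> {q, r} = {x, y}"
      unfolding adj_Diff_singleton by blast
    moreover have "p \<noteq> q" "p \<noteq> r" "q \<noteq> r" using claw(1) by auto
    ultimately show False
    proof (elim disjE)
      assume "{p, q} = {x, y}"
      with claw show False using no_claw_on_xy[of p q c r] \<open>p \<noteq> r\<close> \<open>q \<noteq> r\<close> by simp
    next
      assume "{p, r} = {x, y}"
      with claw show False using no_claw_on_xy[of p r c q] \<open>p \<noteq> q\<close> \<open>q \<noteq> r\<close>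
        by (simp add: adj_commute)
    next
      assume "{q, r} = {x, y}"
      with claw show False using no_claw_on_xy[of q r c p] \<open>p \<noteq> q\<close> \<open>p \<noteq> r\<close>
        by (simp add: adj_commute)
    qed
  qed
qed

theorem lemma2p5:
  fixes V :: "'a set" and E :: "'a set set"
  assumes "sgraph V E" and "strongly_chordal V E" and "E \<noteq> {}"
  shows "\<exists>e. simplicial_edge V E e \<and> strongly_chordal V (E - {e}) \<and>
             (claw_free V E \<longrightarrow> claw_free V (E - {e}))"
proof -
  obtain vs where seo: "strong_elim_order V E vs"
    using assms(2) unfolding strongly_chordal_def by blast
  then have peo: "perfect_elim_order V E vs" unfolding strong_elim_order_def by simp
  then have vo: "vertex_order V vs" unfolding perfect_elim_order_def by simp
  obtain i where i: "i < length vs" "\<exists>w. adj E (vs ! i) w"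
    and before_isolated: "\<forall>a<i. \<forall>w. \<not> adj E (vs ! a) w"
    using vertex_order_first_nonisolated[OF assms(1) vo assms(3)] by blast
  obtain l where l: "l < length vs" "adj E (vs ! i) (vs ! l)"
    and last: "\<forall>j<length vs. adj E (vs ! i) (vs ! j) \<longrightarrow> j \<le> l"
    using i(2) vertex_order_last_neighbour[OF assms(1) vo] by blast
  define e where "e = {vs ! i, vs ! l}"
  have seo': "strong_elim_order V (E - {e}) vs"
    using strong_elim_order_Diff_edge[OF seo i(1) _ before_isolated] unfolding e_def by simp
  have "e \<in> E" using l(2) unfolding e_def adj_def .
  moreover have "\<exists>!K. maximal_clique V E K \<and> e \<subseteq> K"
  proof (rule closed_nbhd_unique_maximal_clique)
    show "clique V E (closed_nbhd E (vs ! i))"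
      using perfect_elim_order_closed_nbhd_clique[OF assms(1) peo i(1) before_isolated] .
    show "vs ! i \<in> e" "e \<subseteq> closed_nbhd E (vs ! i)"
      using l(2) unfolding e_def closed_nbhd_def by simp_all
  qed
  moreover have "chordal V (E - {e})"
    using seo' perfect_elim_order_imp_chordal unfolding strong_elim_order_def by blast
  ultimately have "simplicial_edge V E e" unfolding simplicial_edge_def by blast
  moreover have "claw_free V (E - {e})" if "claw_free V E"
    unfolding e_def using that
    by (rule claw_free_Diff_edge)
      (rule strong_elim_order_second_nbhd[OF assms(1) seo i(1) before_isolated l last])
  ultimately show ?thesis using seo' unfolding strongly_chordal_def by blast
qed

end
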